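(* In any monoid admitting a $C(2)$ presentation, the set of non-identity indecomposable elements is a generating set for the monoid, and it is contained in every generating set for the monoid.
   Context: A monoid presentation $\langle \mathscr{A} \mid \mathscr{R} \rangle$ consists of an alphabet $\mathscr{A}$ and a set $\mathscr{R} \subseteq \mathscr{A}^* \times \mathscr{A}^*$ of relations; the monoid presented is the quotient of the free monoid $\mathscr{A}^*$ by the smallest congruence containing $\mathscr{R}$. A relation word is a word occurring as one side of a relation. A piece is a word which occurs as a factor of two distinct relation words, or in two different (possibly overlapping) positions within one relation word; the empty word is always a piece. The presentation is $C(2)$ if no relation word can be written as a product of strictly fewer than $2$ pieces (i.e. no relation word is empty or is itself a piece). A non-identity element $s$ of a monoid is indecomposable if whenever $xy = s$ we have $x = 1$ or $y = 1$. *)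

theory Defs
  imports Main
begin

definition relation_words :: "('b list \<times> 'b list) set \<Rightarrow> 'b list set" where
  "relation_words R = {w. \<exists>v. (w, v) \<in> R \<or> (v, w) \<in> R}"

definition occurs_at :: "'b list \<Rightarrow> 'b list \<Rightarrow> nat \<Rightarrow> bool" where
  "occurs_at p w i \<longleftrightarrow> i + length p \<le> length w \<and> take (length p) (drop i w) = p"

text \<open>A piece: factor of two distinct relation words, or occurring in two different
  positions in one relation word; the empty word is always a piece.\<close>
definition is_piece :: "('b list \<times> 'b list) set \<Rightarrow> 'b list \<Rightarrow> bool" where
  "is_piece R p \<longleftrightarrow> p = [] \<or>
     (\<exists>w1 i1 w2 i2. w1 \<in> relation_words R \<and> w2 \<in> relation_words R \<and>
        occurs_at p w1 i1 \<and> occurs_at p w2 i2 \<and> (w1, i1) \<noteq> (w2, i2))"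

definition small_cancellation_C :: "nat \<Rightarrow> ('b list \<times> 'b list) set \<Rightarrow> bool" where
  "small_cancellation_C n R \<longleftrightarrow>
     (\<forall>w \<in> relation_words R. \<not> (\<exists>ps. length ps < n \<and> (\<forall>p \<in> set ps. is_piece R p) \<and> concat ps = w))"

definition presentation_congruence :: "'b set \<Rightarrow> ('b list \<times> 'b list) set \<Rightarrow> ('b list \<times> 'b list) set" where
  "presentation_congruence A R = \<Inter> {E. E \<subseteq> lists A \<times> lists A \<and> equiv (lists A) E \<and> R \<subseteq> E \<and>
      (\<forall>(u, v) \<in> E. \<forall>x \<in> lists A. \<forall>y \<in> lists A. (x @ u @ y, x @ v @ y) \<in> E)}"

text \<open>\<open>\<langle>A | R\<rangle>\<close> is a presentation of the monoid (type) \<open>'a\<close> via the generator map \<open>f\<close>: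
  the induced monoid homomorphism \<open>A\<^sup>* \<rightarrow> 'a\<close> is surjective and its kernel is exactly the
  congruence generated by \<open>R\<close>, i.e. it induces an isomorphism \<open>A\<^sup>*/\<sim>\<^sub>R \<cong> 'a\<close>.\<close>
definition is_presentation :: "'b set \<Rightarrow> ('b list \<times> 'b list) set \<Rightarrow> ('b \<Rightarrow> 'a::monoid_mult) \<Rightarrow> bool" where
  "is_presentation A R f \<longleftrightarrow>
     R \<subseteq> lists A \<times> lists A \<and>
     (\<forall>m::'a. \<exists>w \<in> lists A. prod_list (map f w) = m) \<and>
     (\<forall>u \<in> lists A. \<forall>v \<in> lists A.
        prod_list (map f u) = prod_list (map f v) \<longleftrightarrow> (u, v) \<in> presentation_congruence A R)"

definition indecomposable :: "'a::monoid_mult \<Rightarrow> bool" where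
  "indecomposable s \<longleftrightarrow> s \<noteq> 1 \<and> (\<forall>x y. x * y = s \<longrightarrow> x = 1 \<or> y = 1)"

definition generating_set :: "'a::monoid_mult set \<Rightarrow> bool" where
  "generating_set S \<longleftrightarrow> (\<forall>m. \<exists>xs. set xs \<subseteq> S \<and> prod_list xs = m)"

end

theory Submission
  imports Defs
begin

text \<open>In a \<open>C(2)\<close> presentation no relation word is a piece, so a relation word occurs inside a
  relation word only as the whole word. Consequently an elementary rewrite \<open>x r y \<rightarrow> x r' y\<close>
  applies to a relation word only with \<open>x = y = []\<close>: being a relation word is an invariant of
  the congruence, and a non-relation word of length at most one is alone in its class.
  Now if a generator \<open>a\<close> is decomposable, say \<open>f a = f(u) f(v)\<close> with \<open>u, v\<close> nonempty, then
  \<open>[a] \<sim> u v\<close> forces \<open>[a]\<close> and hence \<open>u v\<close> to be relation words; each letter \<open>b\<close> of \<open>u v\<close> then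
  gives a non-relation word \<open>[b]\<close> (it would be a piece of \<open>u v\<close>), so \<open>f b\<close> is indecomposable.
  Thus every generator, and hence every element, is a product of indecomposables; conversely
  an indecomposable element lies in every generating set.\<close>

lemma presentation_congruence_invariant:
  assumes "(u, v) \<in> presentation_congruence A R"
    and "R \<subseteq> lists A \<times> lists A"
    and rewrite: "\<And>r r' x y. (r, r') \<in> R \<Longrightarrow> P (x @ r @ y) = P (x @ r' @ y)"
  shows "P u = P v"
proof -
  let ?E = "{(u, v). u \<in> lists A \<and> v \<in> lists A \<and> (\<forall>x y. P (x @ u @ y) = P (x @ v @ y))}"
  have "equiv (lists A) ?E"
    unfolding equiv_def refl_on_def sym_def trans_def by auto
  moreover have "R \<subseteq> ?E"
    using assms(2) rewrite by auto
  moreover have "(x @ u @ y, x @ v @ y) \<in> ?E"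
    if "(u, v) \<in> ?E" "x \<in> lists A" "y \<in> lists A" for u v x y
  proof -
    have "P ((x' @ x) @ u @ (y @ y')) = P ((x' @ x) @ v @ (y @ y'))" for x' y'
      using that(1) by blast
    then show ?thesis
      using that by auto
  qed
  ultimately have "presentation_congruence A R \<subseteq> ?E"
    unfolding presentation_congruence_def by (intro Inter_lower) auto
  with assms(1) have "P ([] @ u @ []) = P ([] @ v @ [])"
    by blast
  then show ?thesis
    by simp
qed

lemma relation_words_if_mem: "(r, r') \<in> R \<Longrightarrow> r \<in> relation_words R \<and> r' \<in> relation_words R"
  unfolding relation_words_def by auto

lemma occurs_at_append_middle: "occurs_at r (x @ r @ y) (length x)"
  by (simp add: occurs_at_def)

lemma occurs_at_nth: "i < length w \<Longrightarrow> occurs_at [w ! i] w i"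
  unfolding occurs_at_def by (simp add: take_Suc_conv_app_nth)

lemma C2_relation_word_not_piece:
  assumes "small_cancellation_C 2 R" "r \<in> relation_words R"
  shows "\<not> is_piece R r"
proof
  assume "is_piece R r"
  with assms show False
    unfolding small_cancellation_C_def by (auto dest!: bspec[of _ _ r] spec[of _ "[r]"])
qed

lemma C2_relation_word_nonempty:
  assumes "small_cancellation_C 2 R" "r \<in> relation_words R"
  shows "r \<noteq> []"
  using C2_relation_word_not_piece[OF assms] unfolding is_piece_def by auto

lemma C2_occurs_in_relation_word:
  assumes "small_cancellation_C 2 R" "r \<in> relation_words R" "w \<in> relation_words R"
    and "occurs_at r w i"
  shows "w = r \<and> i = 0"
proof (rule ccontr)
  assume "\<not> (w = r \<and> i = 0)"
  moreover have "occurs_at r r 0"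
    by (simp add: occurs_at_def)
  ultimately have "is_piece R r"
    using assms unfolding is_piece_def by blast
  with C2_relation_word_not_piece[OF assms(1,2)] show False
    by simp
qed

lemma C2_relation_word_in_context:
  assumes "small_cancellation_C 2 R" "r \<in> relation_words R" "x @ r @ y \<in> relation_words R"
  shows "x = [] \<and> y = []"
  using C2_occurs_in_relation_word[OF assms occurs_at_append_middle] by auto

lemma C2_relation_words_congruence_invariant:
  assumes "small_cancellation_C 2 R" "R \<subseteq> lists A \<times> lists A"
    and "(u, v) \<in> presentation_congruence A R"
  shows "u \<in> relation_words R \<longleftrightarrow> v \<in> relation_words R"
proof (rule presentation_congruence_invariant[OF assms(3,2)])
  fix r r' x y
  assume "(r, r') \<in> R"
  then have "r \<in> relation_words R" "r' \<in> relation_words R"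
    using relation_words_if_mem by auto
  then show "(x @ r @ y \<in> relation_words R) = (x @ r' @ y \<in> relation_words R)"
    using C2_relation_word_in_context[OF assms(1), of r x y]
      C2_relation_word_in_context[OF assms(1), of r' x y] by auto
qed

lemma C2_short_word_congruence_class:
  assumes "small_cancellation_C 2 R" "R \<subseteq> lists A \<times> lists A"
    and "length w \<le> 1" "w \<notin> relation_words R"
    and "(w, v) \<in> presentation_congruence A R"
  shows "v = w"
proof -
  have "x @ r @ y \<noteq> w" if "r \<in> relation_words R" for r x y
  proof
    assume w: "x @ r @ y = w"
    have "r \<noteq> []"
      using C2_relation_word_nonempty[OF assms(1) that] .
    with w assms(3) have "r = w"
      by (cases x; cases r; auto)
    with that assms(4) show False
      by simp
  qed
  then have "(w = w) = (v = w)"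
    using relation_words_if_mem
    by (intro presentation_congruence_invariant[OF assms(5,2), where P = "\<lambda>u. u = w"]) blast
  then show ?thesis
    by simp
qed

context
  fixes A :: "'b set" and R :: "('b list \<times> 'b list) set" and f :: "'b \<Rightarrow> 'a::monoid_mult"
  assumes presentation: "is_presentation A R f"
    and C2: "small_cancellation_C 2 R"
begin

lemma relations_in_lists: "R \<subseteq> lists A \<times> lists A"
  using presentation unfolding is_presentation_def by auto

lemma word_representing: obtains w where "w \<in> lists A" "prod_list (map f w) = m"
  using presentation unfolding is_presentation_def by blast

lemma congruent_iff_prod_list_eq:
  "u \<in> lists A \<Longrightarrow> v \<in> lists A \<Longrightarrow>
    (u, v) \<in> presentation_congruence A R \<longleftrightarrow> prod_list (map f u) = prod_list (map f v)"
  using presentation unfolding is_presentation_def by blast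

lemma prod_list_nonempty_word_neq_one:
  assumes "u \<in> lists A" "u \<noteq> []"
  shows "prod_list (map f u) \<noteq> 1"
proof
  assume "prod_list (map f u) = 1"
  then have "([], u) \<in> presentation_congruence A R"
    using congruent_iff_prod_list_eq[of "[]" u] assms(1) by simp
  moreover have "[] \<notin> relation_words R"
    using C2_relation_word_nonempty[OF C2] by blast
  ultimately have "u = []"
    using C2_short_word_congruence_class[OF C2 relations_in_lists] by auto
  with assms(2) show False ..
qed

lemma nontrivial_factorisation_word:
  assumes "w \<in> lists A" "x * y = prod_list (map f w)" "x \<noteq> 1" "y \<noteq> 1"
  obtains u v where "u \<in> lists A" "v \<in> lists A" "u \<noteq> []" "v \<noteq> []"
    and "(w, u @ v) \<in> presentation_congruence A R"
proof -
  obtain u where u: "u \<in> lists A" "prod_list (map f u) = x"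
    using word_representing .
  obtain v where v: "v \<in> lists A" "prod_list (map f v) = y"
    using word_representing .
  have "(w, u @ v) \<in> presentation_congruence A R"
    using congruent_iff_prod_list_eq[of w "u @ v"] assms(1,2) u v by simp
  moreover have "u \<noteq> []" "v \<noteq> []"
    using u v assms(3,4) by auto
  ultimately show thesis
    using that u v by blast
qed

lemma letter_indecomposable:
  assumes "a \<in> A" "[a] \<notin> relation_words R"
  shows "indecomposable (f a)"
proof -
  have "f a \<noteq> 1"
    using prod_list_nonempty_word_neq_one[of "[a]"] assms(1) by simp
  moreover have "x = 1 \<or> y = 1" if "x * y = f a" for x y
  proof (rule ccontr)
    assume "\<not> (x = 1 \<or> y = 1)"
    moreover have "x * y = prod_list (map f [a])"
      using that by simp
    ultimately obtain u v where "u \<noteq> []" "v \<noteq> []" "([a], u @ v) \<in> presentation_congruence A R"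
      using nontrivial_factorisation_word[of "[a]" x y] assms(1) by (metis lists.Cons lists.Nil)
    moreover have "u @ v = [a]"
      using C2_short_word_congruence_class[OF C2 relations_in_lists _ assms(2)] calculation(3)
      by simp
    ultimately show False
      by (cases u) auto
  qed
  ultimately show ?thesis
    unfolding indecomposable_def by blast
qed

lemma letter_product_of_indecomposables:
  assumes "a \<in> A"
  shows "\<exists>xs. set xs \<subseteq> {s. indecomposable s} \<and> prod_list xs = f a"
proof (cases "indecomposable (f a)")
  case True
  then show ?thesis
    by (intro exI[of _ "[f a]"]) auto
next
  case False
  moreover have "f a \<noteq> 1"
    using prod_list_nonempty_word_neq_one[of "[a]"] assms by simp
  ultimately obtain x y where "x * y = f a" "x \<noteq> 1" "y \<noteq> 1"
    unfolding indecomposable_def by blast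
  then obtain u v where uv: "u \<in> lists A" "v \<in> lists A" "u \<noteq> []" "v \<noteq> []"
    and cong: "([a], u @ v) \<in> presentation_congruence A R"
    using nontrivial_factorisation_word[of "[a]" x y] assms by auto
  have "[a] \<in> relation_words R"
    using C2_short_word_congruence_class[OF C2 relations_in_lists _ _ cong] uv(3,4)
    by (cases u) auto
  then have uv_rw: "u @ v \<in> relation_words R"
    using C2_relation_words_congruence_invariant[OF C2 relations_in_lists cong] by simp
  have "indecomposable (f b)" if b: "b \<in> set (u @ v)" for b
  proof -
    have "[b] \<notin> relation_words R"
    proof
      assume "[b] \<in> relation_words R"
      moreover obtain i where "i < length (u @ v)" "(u @ v) ! i = b"
        using b by (metis in_set_conv_nth)
      ultimately have "u @ v = [b]"
        using C2_occurs_in_relation_word[OF C2 _ uv_rw] occurs_at_nth[of i "u @ v"] by auto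
      with uv(3,4) show False
        by (cases u) auto
    qed
    then show ?thesis
      using letter_indecomposable b uv(1,2) by auto
  qed
  moreover have "prod_list (map f (u @ v)) = f a"
    using congruent_iff_prod_list_eq[of "[a]" "u @ v"] cong uv(1,2) assms by simp
  ultimately show ?thesis
    by (intro exI[of _ "map f (u @ v)"]) auto
qed

end

lemma prod_list_map_product_of:
  assumes "\<And>b. b \<in> set w \<Longrightarrow> \<exists>xs. set xs \<subseteq> S \<and> prod_list xs = f b"
  shows "\<exists>xs. set xs \<subseteq> S \<and> prod_list xs = prod_list (map f w)"
  using assms
proof (induction w)
  case Nil
  then show ?case
    by (intro exI[of _ "[]"]) auto
next
  case (Cons b w)
  obtain xs where "set xs \<subseteq> S" "prod_list xs = f b"
    using Cons.prems by auto
  moreover obtain ys where "set ys \<subseteq> S" "prod_list ys = prod_list (map f w)"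
    using Cons by auto
  ultimately show ?case
    by (intro exI[of _ "xs @ ys"]) auto
qed

lemma indecomposable_mem_if_prod_list:
  fixes s :: "'a::monoid_mult"
  assumes "set xs \<subseteq> S" "prod_list xs = s" "indecomposable s"
  shows "s \<in> S"
  using assms
proof (induction xs arbitrary: s)
  case Nil
  then show ?case
    by (simp add: indecomposable_def)
next
  case (Cons x xs)
  then have "x = 1 \<or> prod_list xs = 1"
    unfolding indecomposable_def by auto
  with Cons show ?case
    by auto
qed

lemma indecomposable_subset_generating_set:
  "generating_set S \<Longrightarrow> {s. indecomposable s} \<subseteq> S"
  unfolding generating_set_def using indecomposable_mem_if_prod_list by blast

theorem corollary1:
  fixes A :: "'b set" and R :: "('b list \<times> 'b list) set" and f :: "'b \<Rightarrow> 'a::monoid_mult"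
  assumes "is_presentation A R f"
    and "small_cancellation_C 2 R"
  shows "generating_set {s::'a. indecomposable s} \<and>
         (\<forall>S. generating_set S \<longrightarrow> {s::'a. indecomposable s} \<subseteq> S)"
proof
  show "generating_set {s::'a. indecomposable s}"
    unfolding generating_set_def
  proof
    fix m :: 'a
    obtain w where "w \<in> lists A" "prod_list (map f w) = m"
      using word_representing[OF assms] .
    then show "\<exists>xs. set xs \<subseteq> {s. indecomposable s} \<and> prod_list xs = m"
      using prod_list_map_product_of[of w "{s. indecomposable s}" f]
        letter_product_of_indecomposables[OF assms] by auto
  qed
  show "\<forall>S. generating_set S \<longrightarrow> {s::'a. indecomposable s} \<subseteq> S"
    using indecomposable_subset_generating_set by blast
qed

end
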